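(* Let $(\Omega,\mathcal G,\mathbb P)$ be a probability space, $\mathcal F=(\mathcal F_t)_{t\in[0,\infty)}$ a filtration with $\mathcal F_\infty\subset\mathcal G$, and $X$ an $\mathbb R^d$-valued Lévy process relative to $\mathcal F$. If $\mathcal G=\sigma(X)$, then $\mathcal G\otimes\mathcal B_{[0,\infty)}=\mathcal O\vee\sigma_{\Omega\times[0,\infty)}(\blacktriangle X)$. If $\mathcal G=\sigma(X)$ only up to $\mathbb P$-negligible sets, then this equality holds up to evanescent sets.
   Context: $X$ is a Lévy process relative to $\mathcal F$: $\mathcal F$-adapted, càdlàg, $X_0=0$ a.s., and $X_t-X_s$ independent of $\mathcal F_s$ with the law of $X_{t-s}$ for $s\le t$. $(\mathbb D,\mathcal D)$: càdlàg paths $[0,\infty)\to\mathbb R^d$ with the $\sigma$-field generated by coordinate projections. $\blacktriangle X:\Omega\times[0,\infty)\to\mathbb D$ is $(\omega,t)\mapsto(X_{t+s}(\omega)-X_t(\omega))_{s\ge0}$, and $\sigma_{\Omega\times[0,\infty)}(\blacktriangle X)$ is the $\sigma$-field on $\Omega\times[0,\infty)$ it generates. $\mathcal O$ is the optional $\sigma$-field relative to $\mathcal F$. A set in $\Omega\times[0,\infty)$ is evanescent if its projection on $\Omega$ is contained in a $\mathbb P$-null set. *)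

theory Defs
  imports "HOL-Probability.Probability"
begin

text \<open>Paths are functions on the reals; only their values on [0,inf) matter.\<close>

definition cadlag :: "(real \<Rightarrow> 'v::real_normed_vector) \<Rightarrow> bool" where
  "cadlag f \<longleftrightarrow> (\<forall>t\<ge>0. (f \<longlongrightarrow> f t) (at_right t)) \<and>
                  (\<forall>t>0. \<exists>l. (f \<longlongrightarrow> l) (at_left t))"

text \<open>A filtration indexed by [0,inf) of sub-sigma-fields of the sigma-field of M
  (so that F_infinity is contained in the sigma-field of M).\<close>
definition filtration_on :: "'a measure \<Rightarrow> (real \<Rightarrow> 'a set set) \<Rightarrow> bool" where
  "filtration_on M F \<longleftrightarrow> (\<forall>t\<ge>0. sigma_algebra (space M) (F t) \<and> F t \<subseteq> sets M) \<and>
                          (\<forall>s t. 0 \<le> s \<longrightarrow> s \<le> t \<longrightarrow> F s \<subseteq> F t)"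

definition adapted :: "'a measure \<Rightarrow> (real \<Rightarrow> 'a set set) \<Rightarrow> (real \<Rightarrow> 'a \<Rightarrow> 'v::topological_space) \<Rightarrow> bool" where
  "adapted M F X \<longleftrightarrow> (\<forall>t\<ge>0. \<forall>B\<in>sets borel. X t -` B \<inter> space M \<in> F t)"

text \<open>Levy process relative to F: adapted, all paths cadlag, X_0 = 0 a.s., and for
  s <= t the increment X_t - X_s is independent of F_s with the law of X_{t-s}.\<close>
definition levy_process :: "'a measure \<Rightarrow> (real \<Rightarrow> 'a set set) \<Rightarrow> (real \<Rightarrow> 'a \<Rightarrow> 'v::euclidean_space) \<Rightarrow> bool" where
  "levy_process M F X \<longleftrightarrow>
     adapted M F X \<and>
     (\<forall>\<omega>\<in>space M. cadlag (\<lambda>t. X t \<omega>)) \<and>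
     (AE \<omega> in M. X 0 \<omega> = 0) \<and>
     (\<forall>s t. 0 \<le> s \<longrightarrow> s \<le> t \<longrightarrow>
        (\<forall>A\<in>F s. \<forall>B\<in>sets borel.
           measure M (A \<inter> {\<omega>\<in>space M. X t \<omega> - X s \<omega> \<in> B})
             = measure M A * measure M {\<omega>\<in>space M. X (t - s) \<omega> \<in> B}))"

definition sigma_proc :: "'a measure \<Rightarrow> (real \<Rightarrow> 'a \<Rightarrow> 'v::topological_space) \<Rightarrow> 'a set set" where
  "sigma_proc M X = sigma_sets (space M) {X t -` B \<inter> space M | t B. t \<ge> 0 \<and> B \<in> sets borel}"

definition Dspace :: "(real \<Rightarrow> 'v::real_normed_vector) set" where
  "Dspace = {f. cadlag f \<and> (\<forall>s<0. f s = 0)}"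

definition Dmeasure :: "(real \<Rightarrow> 'v::euclidean_space) measure" where
  "Dmeasure = sigma Dspace {{f\<in>Dspace. f s \<in> B} | s B. s \<ge> 0 \<and> B \<in> sets borel}"

definition shift_proc :: "(real \<Rightarrow> 'a \<Rightarrow> 'v::real_normed_vector) \<Rightarrow> 'a \<times> real \<Rightarrow> (real \<Rightarrow> 'v)" where
  "shift_proc X p = (\<lambda>s. if 0 \<le> s then X (snd p + s) (fst p) - X (snd p) (fst p) else 0)"

definition sigma_shift :: "'a measure \<Rightarrow> (real \<Rightarrow> 'a \<Rightarrow> 'v::euclidean_space) \<Rightarrow> ('a \<times> real) set set" where
  "sigma_shift M X = sets (vimage_algebra (space M \<times> {0..}) (shift_proc X) Dmeasure)"

definition optional_sets :: "'a measure \<Rightarrow> (real \<Rightarrow> 'a set set) \<Rightarrow> ('a \<times> real) set set" where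
  "optional_sets M F = sigma_sets (space M \<times> {0..})
     {{p \<in> space M \<times> {0..}. Y (snd p) (fst p) \<in> B} | (Y :: real \<Rightarrow> 'a \<Rightarrow> real) B.
        adapted M F Y \<and> (\<forall>\<omega>\<in>space M. cadlag (\<lambda>t. Y t \<omega>)) \<and> B \<in> sets borel}"

definition prod_sets :: "'a measure \<Rightarrow> ('a \<times> real) set set" where
  "prod_sets M = sets (M \<Otimes>\<^sub>M restrict_space borel {0::real..})"

definition join_sets :: "'a measure \<Rightarrow> ('a \<times> real) set set \<Rightarrow> ('a \<times> real) set set \<Rightarrow> ('a \<times> real) set set" where
  "join_sets M A B = sigma_sets (space M \<times> {0..}) (A \<union> B)"

definition evanescent :: "'a measure \<Rightarrow> ('a \<times> real) set \<Rightarrow> bool" where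
  "evanescent M S \<longleftrightarrow> (\<exists>N\<in>null_sets M. fst ` S \<subseteq> N)"

definition eq_upto_null :: "'a measure \<Rightarrow> 'a set set \<Rightarrow> 'a set set \<Rightarrow> bool" where
  "eq_upto_null M A B \<longleftrightarrow>
     (\<forall>S\<in>A. \<exists>S'\<in>B. \<exists>N\<in>null_sets M. ((S - S') \<union> (S' - S)) \<subseteq> N) \<and>
     (\<forall>S\<in>B. \<exists>S'\<in>A. \<exists>N\<in>null_sets M. ((S - S') \<union> (S' - S)) \<subseteq> N)"

definition eq_upto_evanescent :: "'a measure \<Rightarrow> ('a \<times> real) set set \<Rightarrow> ('a \<times> real) set set \<Rightarrow> bool" where
  "eq_upto_evanescent M A B \<longleftrightarrow>
     (\<forall>S\<in>A. \<exists>S'\<in>B. evanescent M (((S - S') \<union> (S' - S)))) \<and>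
     (\<forall>S\<in>B. \<exists>S'\<in>A. evanescent M (((S - S') \<union> (S' - S))))"

end

theory Submission
  imports Defs
begin

text \<open>
  The two sigma-fields in question are \<open>\<G> \<otimes> \<B>\<close> and \<open>\<J> = \<O> \<or> \<sigma>(\<blacktriangle>X)\<close>.
  Every adapted process with right-continuous paths is jointly measurable, and so is the shift
  map, whose coordinates are \<open>X\<^sub>t\<^sub>+\<^sub>s - X\<^sub>t\<close>; hence \<open>\<J> \<subseteq> \<G> \<otimes> \<B>\<close>.
  Conversely, the time coordinate is optional, and for fixed \<open>u\<close> the value \<open>X\<^sub>u(\<omega>)\<close> is
  \<open>X\<^bsub>u \<and> t\<^esub>(\<omega>)\<close> for \<open>t \<ge> u\<close> (an optional process) and \<open>X\<^sub>t(\<omega>) + (\<blacktriangle>X)(\<omega>,t)(u - t)\<close>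
  for \<open>t < u\<close>, which is \<open>\<J>\<close>-measurable because the path \<open>(\<blacktriangle>X)(\<omega>,t)\<close> is right-continuous.
  So \<open>\<sigma>(X) \<otimes> \<B> \<subseteq> \<J>\<close>, which gives the first claim. For the second, the sets of \<open>\<G> \<otimes> \<B>\<close>
  that differ from a set of \<open>\<J>\<close> by an evanescent set form a sigma-field containing the
  rectangles \<open>A \<times> B\<close>: replace \<open>A\<close> by an element of \<open>\<sigma>(X)\<close> differing from it by a null set.
\<close>

lemma filterlim_add_at_right:
  fixes t s0 :: real
  shows "filterlim (\<lambda>s. t + s) (at_right (t + s0)) (at_right s0)"
  unfolding filterlim_at
  by (auto intro!: tendsto_eq_intros eventually_mono[OF eventually_at_right_less])

lemma filterlim_add_at_left:
  fixes t s0 :: real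
  shows "filterlim (\<lambda>s. t + s) (at_left (t + s0)) (at_left s0)"
  unfolding filterlim_at
proof (intro conjI)
  have "eventually (\<lambda>x. x \<in> {s0 - 1<..<s0}) (at_left s0)"
    by (rule eventually_at_left_real) simp
  then show "\<forall>\<^sub>F x in at_left s0. t + x \<in> {..<t + s0} \<and> t + x \<noteq> t + s0"
    by eventually_elim auto
qed (auto intro!: tendsto_eq_intros)

lemma cadlag_right_continuous: "cadlag f \<Longrightarrow> t \<ge> 0 \<Longrightarrow> (f \<longlongrightarrow> f t) (at_right t)"
  unfolding cadlag_def by blast

lemma cadlag_ident: "cadlag (\<lambda>t::real. t)"
  unfolding cadlag_def by (auto intro!: tendsto_ident_at)

lemma cadlag_inner:
  fixes g :: "real \<Rightarrow> 'v::real_inner"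
  assumes "cadlag g"
  shows "cadlag (\<lambda>t. g t \<bullet> i)"
  unfolding cadlag_def
proof (intro conjI allI impI)
  fix t :: real assume "t \<ge> 0"
  with assms show "((\<lambda>t. g t \<bullet> i) \<longlongrightarrow> g t \<bullet> i) (at_right t)"
    by (intro tendsto_inner tendsto_const cadlag_right_continuous)
next
  fix t :: real assume "t > 0"
  with assms obtain l where "(g \<longlongrightarrow> l) (at_left t)" unfolding cadlag_def by blast
  then have "((\<lambda>t. g t \<bullet> i) \<longlongrightarrow> l \<bullet> i) (at_left t)" by (intro tendsto_inner tendsto_const)
  then show "\<exists>l. ((\<lambda>t. g t \<bullet> i) \<longlongrightarrow> l) (at_left t)" ..
qed

lemma cadlag_stopped:
  fixes g :: "real \<Rightarrow> 'v::real_normed_vector"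
  assumes g: "cadlag g"
  shows "cadlag (\<lambda>t. g (min t u))"
  unfolding cadlag_def
proof (intro conjI allI impI)
  fix t :: real assume t: "t \<ge> 0"
  show "((\<lambda>t. g (min t u)) \<longlongrightarrow> g (min t u)) (at_right t)"
  proof (cases "t < u")
    case True
    have "eventually (\<lambda>s. s \<in> {t<..<u}) (at_right t)" by (rule eventually_at_right_real) fact
    then have "eventually (\<lambda>s. g s = g (min s u)) (at_right t)" by eventually_elim auto
    with True cadlag_right_continuous[OF g t] show ?thesis by (simp add: tendsto_cong)
  next
    case False
    have "eventually (\<lambda>s. g u = g (min s u)) (at_right t)"
      using eventually_at_right_less[of t] by eventually_elim (use False in auto)
    then have "((\<lambda>s. g (min s u)) \<longlongrightarrow> g u) (at_right t)"
      by (rule Lim_transform_eventually[rotated]) simp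
    with False show ?thesis by simp
  qed
next
  fix t :: real assume t: "t > 0"
  show "\<exists>l. ((\<lambda>t. g (min t u)) \<longlongrightarrow> l) (at_left t)"
  proof (cases "t \<le> u")
    case True
    obtain l where l: "(g \<longlongrightarrow> l) (at_left t)" using g t unfolding cadlag_def by blast
    have "eventually (\<lambda>s. s \<in> {t - 1<..<t}) (at_left t)" by (rule eventually_at_left_real) simp
    then have "eventually (\<lambda>s. g s = g (min s u)) (at_left t)" by eventually_elim (use True in auto)
    with l show ?thesis by (auto simp add: tendsto_cong)
  next
    case False
    have "eventually (\<lambda>s. s \<in> {u<..<t}) (at_left t)" by (rule eventually_at_left_real) (use False in simp)
    then have "eventually (\<lambda>s. g u = g (min s u)) (at_left t)" by eventually_elim auto
    then have "((\<lambda>s. g (min s u)) \<longlongrightarrow> g u) (at_left t)"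
      by (rule Lim_transform_eventually[rotated]) simp
    then show ?thesis by blast
  qed
qed

lemma cadlag_increment:
  fixes g :: "real \<Rightarrow> 'v::real_normed_vector"
  assumes g: "cadlag g" and t: "t \<ge> 0"
  shows "cadlag (\<lambda>s. if 0 \<le> s then g (t + s) - g t else 0)"
proof -
  let ?f = "\<lambda>s. if 0 \<le> s then g (t + s) - g t else 0"
  have "(?f \<longlongrightarrow> ?f s0) (at_right s0)" if "s0 \<ge> 0" for s0
  proof -
    have "((\<lambda>s. g (t + s)) \<longlongrightarrow> g (t + s0)) (at_right s0)"
      using g t that unfolding cadlag_def
      by (intro filterlim_compose[OF _ filterlim_add_at_right]) auto
    then have "((\<lambda>s. g (t + s) - g t) \<longlongrightarrow> g (t + s0) - g t) (at_right s0)"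
      by (intro tendsto_intros)
    moreover have "eventually (\<lambda>s. g (t + s) - g t = ?f s) (at_right s0)"
      using eventually_at_right_less[of s0] by eventually_elim (use that in auto)
    ultimately show ?thesis using that by (simp add: tendsto_cong)
  qed
  moreover have "\<exists>l. (?f \<longlongrightarrow> l) (at_left s0)" if "s0 > 0" for s0
  proof -
    have "t + s0 > 0" using t that by simp
    then obtain l where "(g \<longlongrightarrow> l) (at_left (t + s0))"
      using g unfolding cadlag_def by blast
    then have "((\<lambda>s. g (t + s) - g t) \<longlongrightarrow> l - g t) (at_left s0)"
      by (intro tendsto_intros filterlim_compose[OF _ filterlim_add_at_left])
    moreover have "eventually (\<lambda>s. s \<in> {0<..<s0}) (at_left s0)"
      by (rule eventually_at_left_real) (use that in simp)
    then have "eventually (\<lambda>s. g (t + s) - g t = ?f s) (at_left s0)"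
      by eventually_elim auto
    ultimately show ?thesis by (auto simp add: tendsto_cong)
  qed
  ultimately show ?thesis unfolding cadlag_def by blast
qed

lemma floor_grid_tendsto_at_right:
  fixes r :: real
  shows "filterlim (\<lambda>n. (real_of_int \<lfloor>real (Suc n) * r\<rfloor> + 1) / real (Suc n)) (at_right r) sequentially"
proof -
  define a where "a n = (real_of_int \<lfloor>real (Suc n) * r\<rfloor> + 1) / real (Suc n)" for n
  have above: "r < a n" and close: "a n \<le> r + inverse (real (Suc n))" for n
  proof -
    let ?c = "real (Suc n)"
    have c: "?c > 0" by simp
    have "?c * r < real_of_int \<lfloor>?c * r\<rfloor> + 1" by linarith
    then show "r < a n" unfolding a_def using c by (simp add: field_simps)
    have "real_of_int \<lfloor>?c * r\<rfloor> \<le> ?c * r" by linarith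
    then have "real_of_int \<lfloor>?c * r\<rfloor> / ?c \<le> r"
      using c by (simp add: pos_divide_le_eq mult.commute)
    moreover have "a n = real_of_int \<lfloor>?c * r\<rfloor> / ?c + 1 / ?c"
      unfolding a_def by (rule add_divide_distrib)
    ultimately show "a n \<le> r + inverse ?c" by (simp only: inverse_eq_divide)
  qed
  have upper: "(\<lambda>n. r + inverse (real (Suc n))) \<longlonglongrightarrow> r"
    using tendsto_add[OF tendsto_const LIMSEQ_inverse_real_of_nat, of r] by simp
  have "eventually (\<lambda>n. r \<le> a n) sequentially"
    using above by (simp add: less_imp_le)
  moreover have "eventually (\<lambda>n. a n \<le> r + inverse (real (Suc n))) sequentially"
    using close by simp
  ultimately have "a \<longlonglongrightarrow> r"
    using upper by (rule tendsto_sandwich[OF _ _ tendsto_const])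
  then have "filterlim (\<lambda>n. a n) (at_right r) sequentially"
    unfolding filterlim_at using above by (auto intro!: always_eventually dest: less_imp_neq)
  then show ?thesis unfolding a_def .
qed

lemma measurable_eval_right_continuous:
  fixes Phi :: "'b \<Rightarrow> real \<Rightarrow> 'v::metric_space"
  assumes meas: "\<And>s. s \<ge> 0 \<Longrightarrow> (\<lambda>x. Phi x s) \<in> borel_measurable N"
    and r: "r \<in> borel_measurable N" and r_nonneg: "\<And>x. x \<in> space N \<Longrightarrow> r x \<ge> 0"
    and right_cont: "\<And>x. x \<in> space N \<Longrightarrow> (Phi x \<longlongrightarrow> Phi x (r x)) (at_right (r x))"
  shows "(\<lambda>x. Phi x (r x)) \<in> borel_measurable N"
proof (rule borel_measurable_LIMSEQ_metric)
  define a where "a n x = (real_of_int \<lfloor>real (Suc n) * r x\<rfloor> + 1) / real (Suc n)" for n x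
  show "(\<lambda>x. Phi x (a n x)) \<in> borel_measurable N" for n
  proof -
    have floor: "(\<lambda>x. \<lfloor>real (Suc n) * r x\<rfloor>) \<in> measurable N (count_space UNIV)"
      by (rule measurable_compose[OF _ measurable_real_floor]) (use r in simp)
    \<comment> \<open>\<open>max 0\<close> keeps the grid times nonnegative for every integer \<open>k\<close>, so that \<open>meas\<close> applies\<close>
    have "(\<lambda>x. (\<lambda>k::int. \<lambda>x. Phi x ((max 0 (real_of_int k) + 1) / real (Suc n)))
               (\<lfloor>real (Suc n) * r x\<rfloor>) x) \<in> borel_measurable N"
      by (rule measurable_compose_countable[OF _ floor]) (rule meas, simp)
    moreover have "x \<in> space N \<Longrightarrow> (max 0 (real_of_int \<lfloor>real (Suc n) * r x\<rfloor>) + 1) / real (Suc n) = a n x" for x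
      using r_nonneg[of x] by (simp add: a_def)
    ultimately show ?thesis by (simp cong: measurable_cong)
  qed
  show "(\<lambda>n. Phi x (a n x)) \<longlonglongrightarrow> Phi x (r x)" if "x \<in> space N" for x
    unfolding a_def by (rule filterlim_compose[OF right_cont[OF that] floor_grid_tendsto_at_right])
qed

lemma adapted_borel_measurable:
  assumes "adapted M F Y" "filtration_on M F" "t \<ge> 0"
  shows "Y t \<in> borel_measurable M"
proof (rule borel_measurableI)
  fix S :: "'b set" assume "open S"
  then have "Y t -` S \<inter> space M \<in> F t" using assms(1,3) unfolding adapted_def by simp
  then show "Y t -` S \<inter> space M \<in> sets M" using assms(2,3) unfolding filtration_on_def by blast
qed

lemma adapted_ident:
  assumes "filtration_on M F"
  shows "adapted M F (\<lambda>t (\<omega>::'a). t)"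
  unfolding adapted_def
proof (intro allI impI ballI)
  fix t :: real and B :: "real set" assume "t \<ge> 0"
  then interpret sigma_algebra "space M" "F t" using assms unfolding filtration_on_def by blast
  show "(\<lambda>\<omega>. t) -` B \<inter> space M \<in> F t"
    by (cases "t \<in> B") auto
qed

lemma adapted_inner:
  fixes V :: "real \<Rightarrow> 'a \<Rightarrow> 'v::real_inner"
  assumes "adapted M F V"
  shows "adapted M F (\<lambda>t \<omega>. V t \<omega> \<bullet> i)"
  unfolding adapted_def
proof (intro allI impI ballI)
  fix t :: real and B :: "real set" assume t: "t \<ge> 0" and B: "B \<in> sets borel"
  have "(\<lambda>v::'v. v \<bullet> i) \<in> borel_measurable borel"
    by (intro borel_measurable_continuous_onI continuous_intros)
  from measurable_sets[OF this B] have "(\<lambda>v. v \<bullet> i) -` B \<in> sets borel"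
    by simp
  then have "V t -` ((\<lambda>v. v \<bullet> i) -` B) \<inter> space M \<in> F t"
    using assms t unfolding adapted_def by blast
  then show "(\<lambda>\<omega>. V t \<omega> \<bullet> i) -` B \<inter> space M \<in> F t" by (simp add: vimage_def)
qed

lemma adapted_stopped:
  assumes filt: "filtration_on M F" and ad: "adapted M F X" and u: "u \<ge> 0"
  shows "adapted M F (\<lambda>t \<omega>. X (min t u) \<omega>)"
  unfolding adapted_def
proof (intro allI impI ballI)
  fix t :: real and B :: "'b set" assume t: "t \<ge> 0" and B: "B \<in> sets borel"
  have "min t u \<ge> 0" using t u by simp
  then have "X (min t u) -` B \<inter> space M \<in> F (min t u)" "F (min t u) \<subseteq> F t"
    using ad B filt unfolding adapted_def filtration_on_def by auto
  then show "(\<lambda>\<omega>. X (min t u) \<omega>) -` B \<inter> space M \<in> F t" by blast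
qed

lemma space_pair_halfline: "space (M \<Otimes>\<^sub>M restrict_space borel {0::real..}) = space M \<times> {0..}"
  by (simp add: space_pair_measure space_restrict_space)

lemma measurable_snd_halfline: "snd \<in> borel_measurable (M \<Otimes>\<^sub>M restrict_space borel {0::real..})"
proof -
  have "(\<lambda>x. x) \<in> measurable (restrict_space borel {0::real..}) borel"
    by (rule measurable_restrict_space1) simp
  from measurable_compose[OF measurable_snd this, of M] show ?thesis by simp
qed

lemma measurable_process_at_random_time:
  fixes Y :: "real \<Rightarrow> 'a \<Rightarrow> 'v::metric_space"
  assumes meas: "\<And>t. t \<ge> 0 \<Longrightarrow> Y t \<in> borel_measurable M"
    and right_cont: "\<And>\<omega> t. \<omega> \<in> space M \<Longrightarrow> t \<ge> 0 \<Longrightarrow> ((\<lambda>s. Y s \<omega>) \<longlongrightarrow> Y t \<omega>) (at_right t)"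
    and r: "r \<in> borel_measurable (M \<Otimes>\<^sub>M restrict_space borel {0::real..})"
    and r_nonneg: "\<And>p. p \<in> space M \<times> {0..} \<Longrightarrow> r p \<ge> 0"
  shows "(\<lambda>p. Y (r p) (fst p)) \<in> borel_measurable (M \<Otimes>\<^sub>M restrict_space borel {0::real..})"
proof (rule measurable_eval_right_continuous[where Phi = "\<lambda>p s. Y s (fst p)", OF _ r])
  show "(\<lambda>p. Y s (fst p)) \<in> borel_measurable (M \<Otimes>\<^sub>M restrict_space borel {0..})" if "s \<ge> 0" for s
    by (rule measurable_compose[OF measurable_fst meas[OF that]])
qed (use r_nonneg right_cont in \<open>auto simp: space_pair_halfline\<close>)

lemma shift_proc_in_Dspace:
  assumes "\<forall>\<omega>\<in>space M. cadlag (\<lambda>t. X t \<omega>)" and "p \<in> space M \<times> {0..}"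
  shows "shift_proc X p \<in> Dspace"
  using assms cadlag_increment[of "\<lambda>t. X t (fst p)" "snd p"]
  unfolding Dspace_def shift_proc_def by auto

lemma space_Dmeasure: "space Dmeasure = Dspace"
  unfolding Dmeasure_def by (rule space_measure_of) blast

lemma sets_Dmeasure:
  "sets Dmeasure = sigma_sets Dspace {{f\<in>Dspace. f s \<in> B} | s B. s \<ge> 0 \<and> B \<in> sets borel}"
  unfolding Dmeasure_def by (rule sets_measure_of) blast

lemma measurable_coordinate_Dmeasure:
  assumes "s \<ge> 0"
  shows "(\<lambda>f :: real \<Rightarrow> 'v::euclidean_space. f s) \<in> borel_measurable Dmeasure"
  unfolding measurable_def space_Dmeasure
proof (intro CollectI conjI ballI)
  fix B :: "'v set" assume "B \<in> sets borel"
  then have "{f\<in>Dspace. f s \<in> B} \<in> sets Dmeasure"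
    unfolding sets_Dmeasure using assms by (intro sigma_sets.Basic) blast
  then show "(\<lambda>f. f s) -` B \<inter> Dspace \<in> sets Dmeasure" by (simp add: Int_def vimage_def conj_commute)
qed simp

lemma measurable_into_Dmeasure:
  fixes f :: "'b \<Rightarrow> real \<Rightarrow> 'v::euclidean_space"
  assumes "f \<in> space N \<rightarrow> Dspace" and "\<And>s. s \<ge> 0 \<Longrightarrow> (\<lambda>x. f x s) \<in> borel_measurable N"
  shows "f \<in> measurable N Dmeasure"
  unfolding Dmeasure_def
proof (rule measurable_measure_of)
  fix y assume "y \<in> {{g \<in> Dspace. g s \<in> B} | s B. s \<ge> 0 \<and> B \<in> sets (borel :: 'v measure)}"
  then obtain s and B :: "'v set" where y: "y = {g \<in> Dspace. g s \<in> B}"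
    and s: "s \<ge> 0" and B: "B \<in> sets borel"
    by blast
  have "(\<lambda>x. f x s) -` B \<inter> space N \<in> sets N" by (rule measurable_sets[OF assms(2)[OF s] B])
  moreover have "(\<lambda>x. f x s) -` B \<inter> space N = f -` y \<inter> space N" using assms(1) y by auto
  ultimately show "f -` y \<inter> space N \<in> sets N" by simp
qed (use assms(1) in auto)

definition optional_shift_measure ::
    "'a measure \<Rightarrow> (real \<Rightarrow> 'a set set) \<Rightarrow> (real \<Rightarrow> 'a \<Rightarrow> 'v::euclidean_space) \<Rightarrow> ('a \<times> real) measure" where
  "optional_shift_measure M F X = sigma (space M \<times> {0..}) (optional_sets M F \<union> sigma_shift M X)"

lemma optional_sets_subset_Pow: "optional_sets M F \<subseteq> Pow (space M \<times> {0..})"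
proof
  fix A assume "A \<in> optional_sets M F"
  then have "A \<subseteq> space M \<times> {0..}"
    unfolding optional_sets_def by (rule sigma_sets_into_sp[rotated]) auto
  then show "A \<in> Pow (space M \<times> {0..})" by simp
qed

lemma sigma_shift_subset_Pow: "sigma_shift M X \<subseteq> Pow (space M \<times> {0..})"
  unfolding sigma_shift_def
  using sets.space_closed[of "vimage_algebra (space M \<times> {0..}) (shift_proc X) Dmeasure"] by simp

lemma space_optional_shift_measure: "space (optional_shift_measure M F X) = space M \<times> {0..}"
  unfolding optional_shift_measure_def
  by (rule space_measure_of) (use optional_sets_subset_Pow sigma_shift_subset_Pow in blast)

lemma sets_optional_shift_measure:
  "sets (optional_shift_measure M F X) = join_sets M (optional_sets M F) (sigma_shift M X)"
  unfolding optional_shift_measure_def join_sets_def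
  by (rule sets_measure_of) (use optional_sets_subset_Pow sigma_shift_subset_Pow in blast)

lemma measurable_optional_process:
  fixes Y :: "real \<Rightarrow> 'a \<Rightarrow> real"
  assumes "adapted M F Y" "\<forall>\<omega>\<in>space M. cadlag (\<lambda>t. Y t \<omega>)"
  shows "(\<lambda>p. Y (snd p) (fst p)) \<in> borel_measurable (optional_shift_measure M F X)"
  unfolding measurable_def space_optional_shift_measure
proof (intro CollectI conjI ballI)
  fix B :: "real set" assume "B \<in> sets borel"
  with assms have "{p \<in> space M \<times> {0..}. Y (snd p) (fst p) \<in> B} \<in> optional_sets M F"
    unfolding optional_sets_def by (intro sigma_sets.Basic) blast
  then have "{p \<in> space M \<times> {0..}. Y (snd p) (fst p) \<in> B} \<in> sets (optional_shift_measure M F X)"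
    unfolding sets_optional_shift_measure join_sets_def by (intro sigma_sets.Basic) simp
  then show "(\<lambda>p. Y (snd p) (fst p)) -` B \<inter> (space M \<times> {0..}) \<in> sets (optional_shift_measure M F X)"
    by (simp add: vimage_def Int_def conj_commute)
qed simp

lemma measurable_optional_process_euclidean:
  fixes V :: "real \<Rightarrow> 'a \<Rightarrow> 'w::euclidean_space"
  assumes "adapted M F V" "\<forall>\<omega>\<in>space M. cadlag (\<lambda>t. V t \<omega>)"
  shows "(\<lambda>p. V (snd p) (fst p)) \<in> borel_measurable (optional_shift_measure M F X)"
proof (rule iffD2[OF borel_measurable_euclidean_space], rule ballI)
  fix i :: 'w
  have "\<forall>\<omega>\<in>space M. cadlag (\<lambda>t. V t \<omega> \<bullet> i)"
    using assms(2) by (simp add: cadlag_inner)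
  with adapted_inner[OF assms(1)]
  show "(\<lambda>p. V (snd p) (fst p) \<bullet> i) \<in> borel_measurable (optional_shift_measure M F X)"
    by (rule measurable_optional_process)
qed

lemma measurable_shift_proc:
  assumes "\<forall>\<omega>\<in>space M. cadlag (\<lambda>t. X t \<omega>)"
  shows "shift_proc X \<in> measurable (optional_shift_measure M F X) Dmeasure"
  unfolding measurable_iff_sets space_optional_shift_measure
proof
  show "shift_proc X \<in> space M \<times> {0..} \<rightarrow> space Dmeasure"
    using shift_proc_in_Dspace[OF assms] by (simp add: space_Dmeasure)
  show "sets (vimage_algebra (space M \<times> {0..}) (shift_proc X) Dmeasure) \<subseteq> sets (optional_shift_measure M F X)"
    unfolding sets_optional_shift_measure join_sets_def sigma_shift_def[symmetric]
    by (auto intro: sigma_sets.Basic)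
qed

lemma measurable_snd_optional_shift:
  assumes "filtration_on M F"
  shows "snd \<in> borel_measurable (optional_shift_measure M F X)"
  using measurable_optional_process[OF adapted_ident[OF assms], of X] cadlag_ident by simp

lemma measurable_process_value_optional_shift:
  fixes X :: "real \<Rightarrow> 'a \<Rightarrow> 'v::euclidean_space"
  assumes filt: "filtration_on M F" and ad: "adapted M F X"
    and cd: "\<forall>\<omega>\<in>space M. cadlag (\<lambda>t. X t \<omega>)" and u: "u \<ge> 0"
  shows "(\<lambda>p. X u (fst p)) \<in> borel_measurable (optional_shift_measure M F X)"
proof -
  let ?N = "optional_shift_measure M F X"
  have snd: "snd \<in> borel_measurable ?N" by (rule measurable_snd_optional_shift[OF filt])
  have stopped: "(\<lambda>p. X (min (snd p) u) (fst p)) \<in> borel_measurable ?N"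
    using measurable_optional_process_euclidean[OF adapted_stopped[OF filt ad u], of X] cd cadlag_stopped
    by blast
  have current: "(\<lambda>p. X (snd p) (fst p)) \<in> borel_measurable ?N"
    by (rule measurable_optional_process_euclidean[OF ad cd])
  have shifted: "(\<lambda>p. shift_proc X p (max 0 (u - snd p))) \<in> borel_measurable ?N"
  proof (rule measurable_eval_right_continuous[where Phi = "shift_proc X"])
    show "(\<lambda>p. shift_proc X p s) \<in> borel_measurable ?N" if "s \<ge> 0" for s
      using measurable_compose[OF measurable_shift_proc[OF cd] measurable_coordinate_Dmeasure[OF that]] .
    show "(\<lambda>p. max 0 (u - snd p)) \<in> borel_measurable ?N" using snd by measurable
    show "(shift_proc X p \<longlongrightarrow> shift_proc X p (max 0 (u - snd p))) (at_right (max 0 (u - snd p)))"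
      if "p \<in> space ?N" for p
      using shift_proc_in_Dspace[OF cd] that
      unfolding Dspace_def space_optional_shift_measure by (auto intro: cadlag_right_continuous)
  qed simp
  have "snd -` {u..} \<inter> space ?N \<in> sets ?N" by (rule measurable_sets[OF snd]) simp
  then have "{p \<in> space ?N. u \<le> snd p} \<in> sets ?N" by (simp add: vimage_def Int_def conj_commute)
  with stopped current shifted
  have "(\<lambda>p. if u \<le> snd p then X (min (snd p) u) (fst p)
             else X (snd p) (fst p) + shift_proc X p (max 0 (u - snd p))) \<in> borel_measurable ?N"
    by (intro measurable_If borel_measurable_add) assumption+
  then show ?thesis
    by (rule measurable_cong[THEN iffD1, rotated])
      (auto simp: space_optional_shift_measure shift_proc_def min_def)
qed

lemma sigma_proc_times_in_optional_shift:
  fixes X :: "real \<Rightarrow> 'a \<Rightarrow> 'v::euclidean_space"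
  assumes filt: "filtration_on M F" and ad: "adapted M F X"
    and cd: "\<forall>\<omega>\<in>space M. cadlag (\<lambda>t. X t \<omega>)"
    and A: "A \<in> sigma_proc M X" and b: "b \<in> sets (restrict_space borel {0::real..})"
  shows "A \<times> b \<in> sets (optional_shift_measure M F X)"
proof -
  let ?N = "optional_shift_measure M F X"
  let ?G = "{X t -` B \<inter> space M | t B. t \<ge> 0 \<and> B \<in> sets borel}"
  have G: "?G \<subseteq> Pow (space M)" by blast
  have "fst \<in> measurable ?N (sigma (space M) ?G)"
  proof (rule measurable_measure_of[OF G])
    show "fst \<in> space ?N \<rightarrow> space M" by (auto simp: space_optional_shift_measure)
    fix y assume "y \<in> ?G"
    then obtain t B where y: "y = X t -` B \<inter> space M" and t: "t \<ge> 0" and B: "B \<in> sets borel" by blast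
    have "(\<lambda>p. X t (fst p)) -` B \<inter> space ?N \<in> sets ?N"
      by (rule measurable_sets[OF measurable_process_value_optional_shift[OF filt ad cd t] B])
    moreover have "(\<lambda>p. X t (fst p)) -` B \<inter> space ?N = fst -` y \<inter> space ?N"
      by (auto simp: y space_optional_shift_measure)
    ultimately show "fst -` y \<inter> space ?N \<in> sets ?N" by simp
  qed
  moreover have A': "A \<in> sets (sigma (space M) ?G)" "A \<subseteq> space M"
    using A sigma_sets_into_sp[OF G] unfolding sigma_proc_def by (auto simp: sets_measure_of[OF G])
  ultimately have "fst -` A \<inter> space ?N \<in> sets ?N" by (intro measurable_sets)
  moreover have "fst -` A \<inter> space ?N = A \<times> {0..}"
    using A'(2) by (auto simp: space_optional_shift_measure)
  ultimately have strip: "A \<times> {0..} \<in> sets ?N" by simp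
  obtain b' where b': "b' \<in> sets borel" "b = {0..} \<inter> b'" using b by (auto simp: sets_restrict_space)
  have "snd -` b' \<inter> space ?N \<in> sets ?N"
    by (rule measurable_sets[OF measurable_snd_optional_shift[OF filt] b'(1)])
  moreover have "snd -` b' \<inter> space ?N = space M \<times> b" by (auto simp: space_optional_shift_measure b'(2))
  ultimately have "space M \<times> b \<in> sets ?N" by simp
  moreover have "A \<times> b = (A \<times> {0..}) \<inter> (space M \<times> b)" using A'(2) b'(2) by auto
  ultimately show ?thesis using strip by auto
qed

lemma join_subset_prod_sets:
  fixes X :: "real \<Rightarrow> 'a \<Rightarrow> 'v::euclidean_space"
  assumes filt: "filtration_on M F" and ad: "adapted M F X"
    and cd: "\<forall>\<omega>\<in>space M. cadlag (\<lambda>t. X t \<omega>)"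
  shows "join_sets M (optional_sets M F) (sigma_shift M X) \<subseteq> prod_sets M"
proof -
  let ?P = "M \<Otimes>\<^sub>M restrict_space borel {0::real..}"
  have right_cont: "((\<lambda>s. Z s \<omega>) \<longlongrightarrow> Z t \<omega>) (at_right t)"
    if "\<forall>\<omega>\<in>space M. cadlag (\<lambda>t. Z t \<omega>)" "\<omega> \<in> space M" "t \<ge> 0" for Z :: "real \<Rightarrow> 'a \<Rightarrow> 'w::real_normed_vector" and \<omega> t
    using that by (auto intro: cadlag_right_continuous)
  have "optional_sets M F \<subseteq> sets ?P"
    unfolding optional_sets_def
  proof (subst space_pair_halfline[symmetric], rule sets.sigma_sets_subset, safe)
    fix Y :: "real \<Rightarrow> 'a \<Rightarrow> real" and B :: "real set"
    assume Y: "adapted M F Y" "\<forall>\<omega>\<in>space M. cadlag (\<lambda>t. Y t \<omega>)" and B: "B \<in> sets borel"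
    have "(\<lambda>p. Y (snd p) (fst p)) \<in> borel_measurable ?P"
      using adapted_borel_measurable[OF Y(1) filt] right_cont[OF Y(2)] measurable_snd_halfline
      by (rule measurable_process_at_random_time) auto
    from measurable_sets[OF this B] show "{p \<in> space M \<times> {0..}. Y (snd p) (fst p) \<in> B} \<in> sets ?P"
      by (simp add: space_pair_halfline vimage_def Int_def conj_commute)
  qed
  moreover have "shift_proc X \<in> measurable ?P Dmeasure"
  proof (rule measurable_into_Dmeasure)
    show "shift_proc X \<in> space ?P \<rightarrow> Dspace"
      using shift_proc_in_Dspace[OF cd] by (auto simp: space_pair_halfline)
    fix s :: real assume s: "s \<ge> 0"
    have "(\<lambda>p. snd p + s) \<in> borel_measurable ?P"
      using measurable_snd_halfline by measurable
    with adapted_borel_measurable[OF ad filt] right_cont[OF cd]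
    have "(\<lambda>p. X (snd p + s) (fst p)) \<in> borel_measurable ?P"
      by (rule measurable_process_at_random_time) (use s in auto)
    moreover have "(\<lambda>p. X (snd p) (fst p)) \<in> borel_measurable ?P"
      using adapted_borel_measurable[OF ad filt] right_cont[OF cd] measurable_snd_halfline
      by (rule measurable_process_at_random_time) auto
    ultimately have "(\<lambda>p. X (snd p + s) (fst p) - X (snd p) (fst p)) \<in> borel_measurable ?P"
      by (rule borel_measurable_diff)
    then show "(\<lambda>p. shift_proc X p s) \<in> borel_measurable ?P"
      using s by (simp add: shift_proc_def)
  qed
  then have "sigma_shift M X \<subseteq> sets ?P"
    unfolding sigma_shift_def by (rule sets_image_in_sets[OF space_pair_halfline])
  ultimately have "optional_sets M F \<union> sigma_shift M X \<subseteq> sets ?P" by blast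
  then show ?thesis unfolding join_sets_def prod_sets_def
    by (subst space_pair_halfline[symmetric]) (rule sets.sigma_sets_subset)
qed

lemma evanescent_subset: "evanescent M T \<Longrightarrow> S \<subseteq> T \<Longrightarrow> evanescent M S"
  unfolding evanescent_def by blast

lemma evanescent_empty: "evanescent M {}"
  unfolding evanescent_def by blast

lemma evanescent_Times:
  assumes "N \<in> null_sets M" "(A - A') \<union> (A' - A) \<subseteq> N"
  shows "evanescent M ((A \<times> B - A' \<times> B) \<union> (A' \<times> B - A \<times> B))"
  using assms unfolding evanescent_def by (intro bexI[of _ N]) auto

lemma evanescent_UN:
  assumes "\<And>i::nat. evanescent M (S i)"
  shows "evanescent M (\<Union>i. S i)"
proof -
  obtain N where N: "\<And>i. N i \<in> null_sets M" "\<And>i. fst ` S i \<subseteq> N i"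
    using assms unfolding evanescent_def by metis
  have "fst ` (\<Union>i. S i) \<subseteq> (\<Union>i. N i)"
    unfolding image_UN using N(2) by blast
  moreover have "(\<Union>i. N i) \<in> null_sets M" using N(1) by blast
  ultimately show ?thesis unfolding evanescent_def by blast
qed

lemma sigma_sets_approx_evanescent:
  assumes approx: "\<And>S. S \<in> G \<Longrightarrow> \<exists>S'\<in>sigma_sets \<Omega> H. evanescent M ((S - S') \<union> (S' - S))"
    and S: "S \<in> sigma_sets \<Omega> G"
  shows "\<exists>S'\<in>sigma_sets \<Omega> H. evanescent M ((S - S') \<union> (S' - S))"
  using S
proof induction
  case (Basic S)
  then show ?case by (rule approx)
next
  case Empty
  show ?case using sigma_sets.Empty evanescent_empty by force
next
  case (Compl A)
  then obtain A' where "A' \<in> sigma_sets \<Omega> H" "evanescent M ((A - A') \<union> (A' - A))" by blast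
  moreover have "((\<Omega> - A) - (\<Omega> - A')) \<union> ((\<Omega> - A') - (\<Omega> - A)) \<subseteq> (A - A') \<union> (A' - A)" by blast
  ultimately show ?case by (blast intro: sigma_sets.Compl evanescent_subset)
next
  case (Union A)
  then obtain A' where A': "\<And>i. A' i \<in> sigma_sets \<Omega> H" "\<And>i. evanescent M ((A i - A' i) \<union> (A' i - A i))"
    by metis
  have "((\<Union>i. A i) - (\<Union>i. A' i)) \<union> ((\<Union>i. A' i) - (\<Union>i. A i)) \<subseteq> (\<Union>i. (A i - A' i) \<union> (A' i - A i))"
    by blast
  then have "evanescent M (((\<Union>i. A i) - (\<Union>i. A' i)) \<union> ((\<Union>i. A' i) - (\<Union>i. A i)))"
    by (rule evanescent_subset[OF evanescent_UN[OF A'(2)]])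
  with A'(1) show ?case by (blast intro: sigma_sets.Union)
qed

lemma sigma_proc_pair_sets_subset_join:
  fixes X :: "real \<Rightarrow> 'a \<Rightarrow> 'v::euclidean_space"
  assumes "filtration_on M F" and "adapted M F X" and "\<forall>\<omega>\<in>space M. cadlag (\<lambda>t. X t \<omega>)"
  shows "sigma_sets (space M \<times> {0..}) {a \<times> b | a b. a \<in> sigma_proc M X \<and> b \<in> sets (restrict_space borel {0::real..})}
    \<subseteq> join_sets M (optional_sets M F) (sigma_shift M X)"
proof -
  have "{a \<times> b | a b. a \<in> sigma_proc M X \<and> b \<in> sets (restrict_space borel {0::real..})}
      \<subseteq> sets (optional_shift_measure M F X)"
    using sigma_proc_times_in_optional_shift[OF assms] by blast
  from sets.sigma_sets_subset[OF this] show ?thesis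
    by (simp only: space_optional_shift_measure sets_optional_shift_measure)
qed

lemma prod_sets_eq_sigma_rectangles:
  "prod_sets M = sigma_sets (space M \<times> {0..})
     {a \<times> b | a b. a \<in> sets M \<and> b \<in> sets (restrict_space borel {0::real..})}"
  unfolding prod_sets_def sets_pair_measure by (simp add: space_restrict_space)

theorem lemma3p19:
  fixes M :: "'a measure" and F :: "real \<Rightarrow> 'a set set"
    and X :: "real \<Rightarrow> 'a \<Rightarrow> 'v::euclidean_space"
  assumes "prob_space M"
    and "filtration_on M F"
    and "levy_process M F X"
  shows "(sets M = sigma_proc M X \<longrightarrow>
            prod_sets M = join_sets M (optional_sets M F) (sigma_shift M X))
       \<and> (eq_upto_null M (sets M) (sigma_proc M X) \<longrightarrow>
            eq_upto_evanescent M (prod_sets M) (join_sets M (optional_sets M F) (sigma_shift M X)))"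
proof -
  from assms(3) have ad: "adapted M F X" and cd: "\<forall>\<omega>\<in>space M. cadlag (\<lambda>t. X t \<omega>)"
    unfolding levy_process_def by auto
  let ?J = "join_sets M (optional_sets M F) (sigma_shift M X)"
  let ?R = "restrict_space borel {0::real..}"
  have J_sub: "?J \<subseteq> prod_sets M" by (rule join_subset_prod_sets[OF assms(2) ad cd])
  note proc_sub = sigma_proc_pair_sets_subset_join[OF assms(2) ad cd]
  have "prod_sets M = ?J" if "sets M = sigma_proc M X"
  proof
    show "prod_sets M \<subseteq> ?J" using proc_sub unfolding prod_sets_eq_sigma_rectangles that .
  qed (rule J_sub)
  moreover have "eq_upto_evanescent M (prod_sets M) ?J" if null: "eq_upto_null M (sets M) (sigma_proc M X)"
  proof -
    have "\<exists>S'\<in>?J. evanescent M ((S - S') \<union> (S' - S))" if "S \<in> prod_sets M" for S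
      using that unfolding prod_sets_eq_sigma_rectangles join_sets_def
    proof (rule sigma_sets_approx_evanescent[rotated])
      fix S assume "S \<in> {a \<times> b | a b. a \<in> sets M \<and> b \<in> sets ?R}"
      then obtain a b where S: "S = a \<times> b" and "a \<in> sets M" "b \<in> sets ?R" by blast
      have "\<exists>a'\<in>sigma_proc M X. \<exists>N\<in>null_sets M. (a - a') \<union> (a' - a) \<subseteq> N"
        using conjunct1[OF null[unfolded eq_upto_null_def]] \<open>a \<in> sets M\<close> by (rule bspec)
      then obtain a' N where a': "a' \<in> sigma_proc M X" "N \<in> null_sets M" "(a - a') \<union> (a' - a) \<subseteq> N"
        by blast
      have "a' \<times> b \<in> ?J"
        by (rule subsetD[OF proc_sub sigma_sets.Basic]) (use a'(1) \<open>b \<in> sets ?R\<close> in blast)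
      with evanescent_Times[OF a'(2,3), of b]
      show "\<exists>S'\<in>sigma_sets (space M \<times> {0..}) (optional_sets M F \<union> sigma_shift M X).
          evanescent M ((S - S') \<union> (S' - S))"
        unfolding join_sets_def S by (rule bexI)
    qed
    moreover have "\<exists>S'\<in>prod_sets M. evanescent M ((S - S') \<union> (S' - S))" if "S \<in> ?J" for S
    proof
      show "S \<in> prod_sets M" using that J_sub by blast
      show "evanescent M ((S - S) \<union> (S - S))" using evanescent_empty by simp
    qed
    ultimately show ?thesis unfolding eq_upto_evanescent_def by blast
  qed
  ultimately show ?thesis by blast
qed

end
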